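(* Let $A$ be a finite alphabet and let $M,N$ be regular languages over $A(2,\$)$, each consisting of words of the form $(w_1,w_2)\delta_A^L$ with $w_1,w_2\in A^*$. Suppose there are constants $C,C'$ such that $(w_1,w_2)\delta_A^L\in M$ implies $||w_1|-|w_2||\leq C$, and $(w_1',w_2')\delta_A^L\in N$ implies $||w_1'|-|w_2'||\leq C'$. Then the language $M\odot' N=\{(w_1w_1',w_2w_2')\delta_A^L:(w_1,w_2)\delta_A^L\in M,\ (w_1',w_2')\delta_A^L\in N\}$ is regular.
   Context: $A^*$ is the free monoid on $A$, $|w|$ is length. Let $\$\notin A$ and $A(2,\$)=(A\cup\{\$\})^2\setminus\{(\$,\$)\}$. For $\alpha,\beta\in A^*$, $(\alpha,\beta)\delta_A^L$ is the word over $A(2,\$)$ obtained by padding the shorter of $\alpha,\beta$ on the left with $\$$'s to equal length and reading the pairs of letters position by position. Regular means accepted by a finite state automaton. *)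

theory Defs
  imports Main
begin

(* The padding symbol $ is represented by None; a letter a of A by Some a. *)

definition pad_alph :: "'a set \<Rightarrow> ('a option \<times> 'a option) set" where
  "pad_alph A = ((insert None (Some ` A)) \<times> (insert None (Some ` A))) - {(None, None)}"

definition deltaL :: "'a list \<Rightarrow> 'a list \<Rightarrow> ('a option \<times> 'a option) list" where
  "deltaL u v =
     (let n = max (length u) (length v) in
      zip (replicate (n - length u) None @ map Some u)
          (replicate (n - length v) None @ map Some v))"

definition regular :: "'s set \<Rightarrow> 's list set \<Rightarrow> bool" where
  "regular Sig L \<longleftrightarrow>
     (\<exists>(Q :: nat set) q0 (delta :: nat \<Rightarrow> 's \<Rightarrow> nat) F.
        finite Q \<and> q0 \<in> Q \<and> (\<forall>q\<in>Q. \<forall>x\<in>Sig. delta q x \<in> Q) \<and> F \<subseteq> Q \<and>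
        L = {w. set w \<subseteq> Sig \<and> foldl delta q0 w \<in> F})"

definition odot' :: "('a option \<times> 'a option) list set \<Rightarrow> ('a option \<times> 'a option) list set
                      \<Rightarrow> ('a option \<times> 'a option) list set" where
  "odot' M N = {deltaL (w1 @ w1') (w2 @ w2') | w1 w2 w1' w2'.
                   deltaL w1 w2 \<in> M \<and> deltaL w1' w2' \<in> N}"

end

theory Submission
  imports Defs
begin

text \<open>A language is regular iff it has finitely many left quotients (Myhill--Nerode), and
  this is preserved by union, intersection, concatenation, quotients and inverse images under
  sequential transducers. Split a word of \<open>M \<odot>' N\<close> according to which of \<open>w1'\<close>, \<open>w2'\<close>
  is longer; swapping the two tracks reduces to \<open>|w2'| \<le> |w1'|\<close>. Writing \<open>w1' = a r\<close> with
  \<open>|r| = |w2'|\<close>, the bound on \<open>N\<close> gives \<open>|a| \<le> C'\<close>, and the word is \<open>(w1 a, w2)\<delta>\<close>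
  followed by the aligned word \<open>(r, w2')\<delta>\<close>, where \<open>(a, \<epsilon>)\<delta> (r, w2')\<delta> \<in> N\<close>. So this
  part is a finite union over \<open>a\<close> of concatenations of \<open>M\<close> with \<open>a\<close> appended to its top
  track and a quotient of \<open>N\<close> restricted to aligned words. Appending a letter to the top
  track preserves regularity since a transducer with one letter of delay recovers the
  original convolution.\<close>

definition lquot :: "'s list set \<Rightarrow> 's list \<Rightarrow> 's list set" where
  "lquot L u = {v. u @ v \<in> L}"

lemma lquot_Nil [simp]: "lquot L [] = L"
  by (simp add: lquot_def)

lemma lquot_lquot [simp]: "lquot (lquot L u) v = lquot L (u @ v)"
  by (simp add: lquot_def)

lemma foldl_in_states:
  assumes "\<forall>q\<in>Q. \<forall>x\<in>Sig. delta q x \<in> Q" "q \<in> Q" "w \<in> lists Sig"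
  shows "foldl delta q w \<in> Q"
  using assms(2,3) by (induction w arbitrary: q) (auto simp: assms(1))

lemma regular_imp_finite_lquot:
  assumes "regular Sig L"
  shows "L \<subseteq> lists Sig \<and> finite (range (lquot L))"
proof -
  obtain Q q0 delta F where Q: "finite (Q::nat set)" "q0 \<in> Q" "\<forall>q\<in>Q. \<forall>x\<in>Sig. delta q x \<in> Q"
    and L: "L = {w. set w \<subseteq> Sig \<and> foldl delta q0 w \<in> F}"
    using assms unfolding regular_def by blast
  define accepted where "accepted q = {v \<in> lists Sig. foldl delta q v \<in> F}" for q
  have "lquot L w \<in> insert {} (accepted ` Q)" for w
  proof (cases "w \<in> lists Sig")
    case True
    then have "lquot L w = accepted (foldl delta q0 w)"
      unfolding lquot_def accepted_def L by auto
    then show ?thesis using foldl_in_states[OF Q(3,2) True] by simp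
  next
    case False
    then have "lquot L w = {}" unfolding lquot_def L by auto
    then show ?thesis by simp
  qed
  then have "range (lquot L) \<subseteq> insert {} (accepted ` Q)" by blast
  then have "finite (range (lquot L))" by (rule finite_subset) (simp add: Q(1))
  moreover have "L \<subseteq> lists Sig" unfolding L by auto
  ultimately show ?thesis by simp
qed

text \<open>The left quotients themselves are the states.\<close>
lemma finite_lquot_imp_regular:
  assumes L: "L \<subseteq> lists Sig" and fin: "finite (range (lquot L))"
  shows "regular Sig L"
proof -
  define R where "R = range (lquot L)"
  obtain f :: "'a list set \<Rightarrow> nat" and n where f: "f ` R = {i. i < n}" "inj_on f R"
    using finite_imp_inj_to_nat_seg[OF fin[folded R_def]] by blast
  define delta where "delta i x = f (lquot (inv_into R f i) [x])" for i x
  have step: "delta (f (lquot L u)) x = f (lquot L (u @ [x]))" for u x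
    using f(2) by (simp add: delta_def R_def)
  have run: "foldl delta (f (lquot L u)) w = f (lquot L (u @ w))" for u w
    by (induction w arbitrary: u) (simp_all add: step)
  from run[of "[]"] have run_L: "foldl delta (f L) w = f (lquot L w)" for w
    by simp
  have accept: "f (lquot L w) \<in> f ` {X \<in> R. [] \<in> X} \<longleftrightarrow> w \<in> L" for w
    using inj_on_image_mem_iff[OF f(2), of "lquot L w" "{X \<in> R. [] \<in> X}"]
    by (auto simp: R_def lquot_def)
  show ?thesis unfolding regular_def
  proof (intro exI conjI)
    show "finite (f ` R)" "f ` {X \<in> R. [] \<in> X} \<subseteq> f ` R"
      using fin by (auto simp: R_def)
    show "f (lquot L []) \<in> f ` R"
      unfolding R_def by blast
    show "\<forall>q\<in>f ` R. \<forall>x\<in>Sig. delta q x \<in> f ` R"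
      by (auto simp: R_def step)
    show "L = {w. set w \<subseteq> Sig \<and> foldl delta (f (lquot L [])) w \<in> f ` {X \<in> R. [] \<in> X}}"
      using L by (auto simp: run_L accept)
  qed
qed

lemma regular_iff_finite_lquot: "regular Sig L \<longleftrightarrow> L \<subseteq> lists Sig \<and> finite (range (lquot L))"
  using regular_imp_finite_lquot finite_lquot_imp_regular by blast

lemma regular_if_lquot_in_image:
  assumes "L \<subseteq> lists Sig" "finite X" "\<And>w. lquot L w \<in> f ` X"
  shows "regular Sig L"
proof -
  have "range (lquot L) \<subseteq> f ` X" using assms(3) by blast
  then show ?thesis by (intro finite_lquot_imp_regular[OF assms(1)] finite_surj[OF assms(2)])
qed

lemma regular_empty: "regular Sig {}"
  by (rule regular_if_lquot_in_image[where X = "{{}}" and f = id]) (auto simp: lquot_def)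

lemma regular_lists:
  assumes "T \<subseteq> Sig" shows "regular Sig (lists T)"
  by (rule regular_if_lquot_in_image[where X = "{lists T, {}}" and f = id])
    (use assms in \<open>auto simp: lquot_def\<close>)

lemma regular_lquot:
  assumes "regular Sig L" shows "regular Sig (lquot L u)"
proof (rule regular_if_lquot_in_image[where X = "range (lquot L)" and f = id])
  show "lquot L u \<subseteq> lists Sig"
    using assms by (auto simp: regular_iff_finite_lquot lquot_def)
qed (use assms in \<open>auto simp: regular_iff_finite_lquot\<close>)

lemma regular_Un:
  assumes "regular Sig L1" "regular Sig L2" shows "regular Sig (L1 \<union> L2)"
proof (rule regular_if_lquot_in_image[where X = "range (lquot L1) \<times> range (lquot L2)"
      and f = "\<lambda>(X, Y). X \<union> Y"])
  show "lquot (L1 \<union> L2) w \<in> (\<lambda>(X, Y). X \<union> Y) ` (range (lquot L1) \<times> range (lquot L2))" for w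
    by (rule image_eqI[where x = "(lquot L1 w, lquot L2 w)"]) (auto simp: lquot_def)
qed (use assms in \<open>auto simp: regular_iff_finite_lquot\<close>)

lemma regular_Int:
  assumes "regular Sig L1" "regular Sig L2" shows "regular Sig (L1 \<inter> L2)"
proof (rule regular_if_lquot_in_image[where X = "range (lquot L1) \<times> range (lquot L2)"
      and f = "\<lambda>(X, Y). X \<inter> Y"])
  show "lquot (L1 \<inter> L2) w \<in> (\<lambda>(X, Y). X \<inter> Y) ` (range (lquot L1) \<times> range (lquot L2))" for w
    by (rule image_eqI[where x = "(lquot L1 w, lquot L2 w)"]) (auto simp: lquot_def)
qed (use assms in \<open>auto simp: regular_iff_finite_lquot\<close>)

lemma regular_UN:
  assumes "finite I" "\<And>i. i \<in> I \<Longrightarrow> regular Sig (L i)" shows "regular Sig (\<Union>i\<in>I. L i)"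
  using assms by (induction I rule: finite_induct) (auto intro: regular_empty regular_Un)

definition conc :: "'s list set \<Rightarrow> 's list set \<Rightarrow> 's list set" where
  "conc L1 L2 = {u @ v | u v. u \<in> L1 \<and> v \<in> L2}"

lemma lquot_conc:
  "lquot (conc L1 L2) w = conc (lquot L1 w) L2 \<union> \<Union> {lquot L2 v | v. \<exists>u \<in> L1. w = u @ v}"
proof (intro set_eqI iffI)
  fix z assume "z \<in> lquot (conc L1 L2) w"
  then obtain u v where uv: "u \<in> L1" "v \<in> L2" "w @ z = u @ v" by (auto simp: lquot_def conc_def)
  then obtain s where "w = u @ s \<and> s @ z = v \<or> w @ s = u \<and> z = s @ v"
    by (auto simp: append_eq_append_conv2)
  then show "z \<in> conc (lquot L1 w) L2 \<union> \<Union> {lquot L2 v | v. \<exists>u \<in> L1. w = u @ v}"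
  proof
    assume "w = u @ s \<and> s @ z = v"
    then have "z \<in> lquot L2 s" "\<exists>u \<in> L1. w = u @ s" using uv by (auto simp: lquot_def)
    then show ?thesis by blast
  next
    assume "w @ s = u \<and> z = s @ v"
    then show ?thesis using uv by (auto simp: lquot_def conc_def)
  qed
next
  fix z assume "z \<in> conc (lquot L1 w) L2 \<union> \<Union> {lquot L2 v | v. \<exists>u \<in> L1. w = u @ v}"
  then show "z \<in> lquot (conc L1 L2) w"
    by (auto simp: lquot_def conc_def) (metis append_assoc)+
qed

lemma regular_conc:
  assumes "regular Sig L1" "regular Sig L2" shows "regular Sig (conc L1 L2)"
proof (rule regular_if_lquot_in_image[where X = "range (lquot L1) \<times> Pow (range (lquot L2))"
      and f = "\<lambda>(X, Y). conc X L2 \<union> \<Union>Y"])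
  show "conc L1 L2 \<subseteq> lists Sig"
    using assms by (fastforce simp: regular_iff_finite_lquot conc_def)
  show "lquot (conc L1 L2) w
      \<in> (\<lambda>(X, Y). conc X L2 \<union> \<Union>Y) ` (range (lquot L1) \<times> Pow (range (lquot L2)))" for w
    by (rule image_eqI[where x = "(lquot L1 w, {lquot L2 v | v. \<exists>u \<in> L1. w = u @ v})"])
      (auto simp: lquot_conc)
qed (use assms in \<open>auto simp: regular_iff_finite_lquot\<close>)

fun transduce :: "('q \<Rightarrow> 'b \<Rightarrow> 'q) \<Rightarrow> ('q \<Rightarrow> 'b \<Rightarrow> 'c list) \<Rightarrow> 'q \<Rightarrow> 'b list \<Rightarrow> 'c list" where
  "transduce tr out q [] = []"
| "transduce tr out q (a # w) = out q a @ transduce tr out (tr q a) w"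

lemma transduce_append:
  "transduce tr out q (u @ v) = transduce tr out q u @ transduce tr out (foldl tr q u) v"
  by (induction u arbitrary: q) auto

lemma regular_transducer_preimage:
  assumes "finite Q" "q0 \<in> Q" "\<forall>q\<in>Q. \<forall>a\<in>Sig. tr q a \<in> Q" "regular Sig' M"
  shows "regular Sig {w \<in> lists Sig. foldl tr q0 w \<in> G \<and> transduce tr out q0 w \<in> M}"
    (is "regular Sig ?L")
proof -
  define accepted where
    "accepted q R = {v \<in> lists Sig. foldl tr q v \<in> G \<and> transduce tr out q v \<in> R}" for q R
  have "lquot ?L u \<in> insert {} ((\<lambda>(q, R). accepted q R) ` (Q \<times> range (lquot M)))" for u
  proof (cases "u \<in> lists Sig")
    case True
    then have "lquot ?L u = accepted (foldl tr q0 u) (lquot M (transduce tr out q0 u))"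
      by (auto simp: lquot_def accepted_def transduce_append)
    then show ?thesis using foldl_in_states[OF assms(3,2) True] by auto
  qed (auto simp: lquot_def)
  then have sub: "range (lquot ?L) \<subseteq> insert {} ((\<lambda>(q, R). accepted q R) ` (Q \<times> range (lquot M)))"
    by blast
  have "finite (range (lquot M))"
    using assms(4) by (simp add: regular_iff_finite_lquot)
  then have "finite (range (lquot ?L))"
    using assms(1) by (intro finite_subset[OF sub]) simp
  then show ?thesis by (auto simp: regular_iff_finite_lquot)
qed

lemma transduce_letterwise: "transduce (\<lambda>_ _. ()) (\<lambda>_ a. [f a]) () w = map f w"
  by (induction w) auto

lemma regular_map_preimage:
  assumes "regular Sig' M" shows "regular Sig {w \<in> lists Sig. map f w \<in> M}"
proof -
  have "regular Sig {w \<in> lists Sig. foldl (\<lambda>_ _. ()) () w \<in> UNIV \<and>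
      transduce (\<lambda>_ _. ()) (\<lambda>_ a. [f a]) () w \<in> M}"
    by (rule regular_transducer_preimage[of "{()}"]) (use assms in auto)
  then show ?thesis by (simp only: transduce_letterwise UNIV_I simp_thms)
qed

lemma regular_map_swap:
  assumes "regular Sig L" "prod.swap ` Sig \<subseteq> Sig"
  shows "regular Sig (map prod.swap ` L)"
proof -
  have L: "L \<subseteq> lists Sig" using assms(1) by (simp add: regular_iff_finite_lquot)
  have "map prod.swap ` L = {w \<in> lists Sig. map prod.swap w \<in> L}"
  proof (intro set_eqI iffI)
    fix w assume "w \<in> map prod.swap ` L"
    then obtain z where "z \<in> L" "w = map prod.swap z" by blast
    then show "w \<in> {w \<in> lists Sig. map prod.swap w \<in> L}"
      using L assms(2) by (fastforce simp: comp_def image_subset_iff)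
  next
    fix w assume "w \<in> {w \<in> lists Sig. map prod.swap w \<in> L}"
    then have "map prod.swap (map prod.swap w) \<in> map prod.swap ` L" by blast
    then show "w \<in> map prod.swap ` L" by (simp add: comp_def)
  qed
  then show ?thesis using regular_map_preimage[OF assms(1)] by simp
qed

type_synonym 'a pad_letter = "'a option \<times> 'a option"

lemma length_deltaL [simp]: "length (deltaL u v) = max (length u) (length v)"
  by (simp add: deltaL_def Let_def)

lemma map_fst_deltaL:
  "map fst (deltaL u v) = replicate (max (length u) (length v) - length u) None @ map Some u"
  by (simp add: deltaL_def Let_def)

lemma map_snd_deltaL:
  "map snd (deltaL u v) = replicate (max (length u) (length v) - length v) None @ map Some v"
  by (simp add: deltaL_def Let_def)

lemma deltaL_inject: "deltaL u v = deltaL u' v' \<longleftrightarrow> u = u' \<and> v = v'"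
proof
  have "removeAll None (replicate k None) = []" for k :: nat
    by (induction k) simp_all
  moreover have "removeAll None (map Some w) = map Some w" for w :: "'a list"
    by (induction w) simp_all
  ultimately have unpad: "map the (removeAll None (replicate k None @ map Some w)) = w"
    for k and w :: "'a list"
    by (simp add: comp_def)
  assume "deltaL u v = deltaL u' v'"
  then have "map fst (deltaL u v) = map fst (deltaL u' v')" "map snd (deltaL u v) = map snd (deltaL u' v')"
    by simp_all
  then show "u = u' \<and> v = v'"
    unfolding map_fst_deltaL map_snd_deltaL by (metis unpad)
qed simp

lemma deltaL_swap: "map prod.swap (deltaL u v) = deltaL v u"
  by (rule pair_list_eqI) (simp_all add: comp_def map_fst_deltaL map_snd_deltaL max.commute)

lemma deltaL_same_length: "length r = length s \<Longrightarrow> deltaL r s = zip (map Some r) (map Some s)"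
  by (simp add: deltaL_def)

lemma deltaL_append:
  "length r = length s \<Longrightarrow> deltaL u v @ deltaL r s = deltaL (u @ r) (v @ s)"
  by (rule pair_list_eqI) (simp_all add: map_fst_deltaL map_snd_deltaL max_def)

lemma deltaL_in_lists_pad_alph:
  assumes "u \<in> lists A" "v \<in> lists A" shows "deltaL u v \<in> lists (pad_alph A)"
proof (unfold in_lists_conv_set, intro ballI)
  fix p assume p: "p \<in> set (deltaL u v)"
  have fst: "fst p \<in> set (map fst (deltaL u v))" and snd: "snd p \<in> set (map snd (deltaL u v))"
    using p by simp_all
  have "p \<noteq> (None, None)"
  proof (cases "length v \<le> length u")
    case True
    then show ?thesis using fst by (auto simp: map_fst_deltaL max_def)
  next
    case False
    then show ?thesis using snd by (auto simp: map_snd_deltaL max_def)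
  qed
  moreover have "fst p \<in> insert None (Some ` A)" "snd p \<in> insert None (Some ` A)"
    using fst snd assms by (auto simp: map_fst_deltaL map_snd_deltaL split: if_splits)
  ultimately show "p \<in> pad_alph A" by (cases p) (auto simp: pad_alph_def)
qed

lemma lists_aligned_eq:
  "lists (Some ` A \<times> Some ` A) = {deltaL r s | r s. length r = length s \<and> r \<in> lists A \<and> s \<in> lists A}"
proof (intro set_eqI iffI)
  fix t assume t: "t \<in> lists (Some ` A \<times> Some ` A)"
  define r s where "r = map (the \<circ> fst) t" and "s = map (the \<circ> snd) t"
  have "map Some r = map fst t" "map Some s = map snd t"
    using t by (auto simp: r_def s_def)
  moreover have "deltaL r s = zip (map Some r) (map Some s)"
    by (rule deltaL_same_length) (simp add: r_def s_def)
  ultimately have "t = deltaL r s"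
    by (simp add: zip_map_fst_snd)
  moreover have "r \<in> lists A" "s \<in> lists A" using t by (fastforce simp: r_def s_def)+
  moreover have "length r = length s" by (simp add: r_def s_def)
  ultimately show "t \<in> {deltaL r s | r s. length r = length s \<and> r \<in> lists A \<and> s \<in> lists A}"
    by blast
next
  fix t assume "t \<in> {deltaL r s | r s. length r = length s \<and> r \<in> lists A \<and> s \<in> lists A}"
  then show "t \<in> lists (Some ` A \<times> Some ` A)"
    by (fastforce simp: deltaL_same_length zip_map_map dest: set_zip_leftD set_zip_rightD)
qed

lemma fst_hd_deltaL_eq_None_iff:
  "deltaL u v \<noteq> [] \<Longrightarrow> fst (hd (deltaL u v)) = None \<longleftrightarrow> length u < length v"
proof -
  assume ne: "deltaL u v \<noteq> []"
  then have hd: "fst (hd (deltaL u v)) = hd (map fst (deltaL u v))" by (simp add: hd_map)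
  show ?thesis
  proof (cases "length u < length v")
    case True
    then show ?thesis unfolding hd map_fst_deltaL by simp
  next
    case False
    then have "u \<noteq> []" using ne by (metis length_0_conv length_deltaL max.absorb1 not_le_imp_less)
    then show ?thesis using False unfolding hd map_fst_deltaL by (simp add: max_def hd_map)
  qed
qed

lemma snd_hd_deltaL_eq_None_iff:
  "deltaL u v \<noteq> [] \<Longrightarrow> snd (hd (deltaL u v)) = None \<longleftrightarrow> length v < length u"
proof -
  assume ne: "deltaL u v \<noteq> []"
  then have "snd (hd (deltaL u v)) = fst (hd (map prod.swap (deltaL u v)))"
    by (simp add: hd_map)
  also have "\<dots> = fst (hd (deltaL v u))" by (simp only: deltaL_swap)
  finally have "snd (hd (deltaL u v)) = fst (hd (deltaL v u))" .
  moreover have "deltaL v u \<noteq> []"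
    using ne length_deltaL[of u v] length_deltaL[of v u] by (metis length_0_conv max.commute)
  ultimately show ?thesis
    using fst_hd_deltaL_eq_None_iff[of v u] by simp
qed

lemma fst_last_deltaL_snoc: "fst (last (deltaL (u @ [x]) v)) = Some x"
proof -
  have "length (deltaL (u @ [x]) v) \<noteq> 0" by simp
  then have "deltaL (u @ [x]) v \<noteq> []" by blast
  then show ?thesis
    using last_map[of "deltaL (u @ [x]) v" fst] by (simp add: map_fst_deltaL)
qed

text \<open>Appending \<open>x\<close> to the top word of \<open>(u, v)\<delta>\<close> shifts the top track one place to the
  left if \<open>u\<close> is shorter than \<open>v\<close>, and otherwise adds a column \<open>(x, $)\<close> on the right and
  one more \<open>$\<close> at the left end of the bottom track. The next two maps undo these effects.\<close>

definition shift_top :: "'a pad_letter list \<Rightarrow> 'a pad_letter list" where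
  "shift_top n = zip (None # butlast (map fst n)) (map snd n)"

definition drop_corners :: "'a pad_letter list \<Rightarrow> 'a pad_letter list" where
  "drop_corners n = zip (butlast (map fst n)) (tl (map snd n))"

lemma shift_top_deltaL_snoc:
  assumes "length u < length v" shows "shift_top (deltaL (u @ [x]) v) = deltaL u v"
proof -
  obtain k where k: "length v - length u = Suc k" using assms by (metis Suc_diff_Suc)
  then have "length v - Suc (length u) = k" by simp
  then have "map fst (deltaL (u @ [x]) v) = replicate k None @ map Some u @ [Some x]"
    using assms by (simp add: map_fst_deltaL max_def)
  then show ?thesis unfolding shift_top_def
    using assms k
    by (intro pair_list_eqI) (simp_all add: map_fst_deltaL map_snd_deltaL max_def butlast_append)
qed

lemma drop_corners_deltaL_snoc:
  assumes "length v \<le> length u" shows "drop_corners (deltaL (u @ [x]) v) = deltaL u v"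
proof -
  have "map fst (deltaL (u @ [x]) v) = map Some u @ [Some x]"
    "map snd (deltaL (u @ [x]) v) = None # replicate (length u - length v) None @ map Some v"
    using assms by (simp_all add: map_fst_deltaL map_snd_deltaL max_def Suc_diff_le)
  then show ?thesis unfolding drop_corners_def
    using assms by (intro pair_list_eqI) (simp_all add: map_fst_deltaL map_snd_deltaL max_def)
qed

lemma deltaL_snoc_if_shift_top:
  assumes "n \<noteq> []" "fst (last n) = Some x" "shift_top n = deltaL u v"
  shows "n = deltaL (u @ [x]) v"
proof -
  have fst: "map fst (deltaL u v) = None # butlast (map fst n)"
    and snd: "map snd (deltaL u v) = map snd n"
    using assms(1) unfolding assms(3)[symmetric] shift_top_def by simp_all
  have ne: "deltaL u v \<noteq> []" using snd assms(1) by (metis Nil_is_map_conv)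
  then have "fst (hd (deltaL u v)) = hd (map fst (deltaL u v))" by (simp add: hd_map)
  then have "fst (hd (deltaL u v)) = None" by (simp add: fst)
  then have lt: "length u < length v" using fst_hd_deltaL_eq_None_iff[OF ne] by simp
  have "map fst n = butlast (map fst n) @ [Some x]"
    using append_butlast_last_id[of "map fst n"] assms(1,2) by (simp add: last_map)
  also have "\<dots> = tl (map fst (deltaL u v)) @ [Some x]" using fst by simp
  also have "\<dots> = map fst (deltaL (u @ [x]) v)"
    using lt by (simp add: map_fst_deltaL max_def Suc_diff_Suc)
  finally show ?thesis
    using snd lt by (intro pair_list_eqI) (simp_all add: map_snd_deltaL max_def)
qed

lemma deltaL_snoc_if_drop_corners:
  assumes "n \<noteq> []" "fst (last n) = Some x" "snd (hd n) = None" "fst (hd n) \<noteq> None"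
    and "drop_corners n = deltaL u v"
  shows "n = deltaL (u @ [x]) v"
proof -
  have fst: "map fst (deltaL u v) = butlast (map fst n)"
    and snd: "map snd (deltaL u v) = tl (map snd n)"
    unfolding assms(5)[symmetric] drop_corners_def by simp_all
  have le: "length v \<le> length u"
  proof (cases "deltaL u v = []")
    case False
    then have ne: "butlast (map fst n) \<noteq> []" using fst by (metis Nil_is_map_conv)
    have "fst (hd (deltaL u v)) = hd (butlast (map fst n))" using hd_map[OF False, of fst] fst by simp
    also have "\<dots> = hd (map fst n)" using ne by (cases "map fst n") auto
    also have "\<dots> = fst (hd n)" using assms(1) by (simp add: hd_map)
    finally show ?thesis using assms(4) fst_hd_deltaL_eq_None_iff[OF False] by auto
  qed (use length_deltaL[of u v] in \<open>simp add: max_def split: if_splits\<close>)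
  have "map fst n = butlast (map fst n) @ [Some x]"
    using append_butlast_last_id[of "map fst n"] assms(1,2) by (simp add: last_map)
  also have "\<dots> = map fst (deltaL (u @ [x]) v)"
    using fst le by (simp add: map_fst_deltaL max_def)
  finally show ?thesis
  proof (rule pair_list_eqI)
    have "map snd n = None # tl (map snd n)" using assms(1,3) by (cases n) auto
    then show "map snd n = map snd (deltaL (u @ [x]) v)"
      using snd le by (simp add: map_snd_deltaL max_def Suc_diff_le)
  qed
qed

definition convolutions :: "'a set \<Rightarrow> 'a pad_letter list set" where
  "convolutions A = {deltaL u v | u v. u \<in> lists A \<and> v \<in> lists A}"

definition append_top :: "'a list \<Rightarrow> 'a pad_letter list set \<Rightarrow> 'a pad_letter list set" where
  "append_top a M = {deltaL (u @ a) v | u v. deltaL u v \<in> M}"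

lemma append_top_singleton_eq:
  assumes "M \<subseteq> convolutions A" "x \<in> A"
  shows "append_top [x] M =
      {n \<in> lists (pad_alph A). n \<noteq> [] \<and> fst (last n) = Some x \<and> shift_top n \<in> M}
    \<union> {n \<in> lists (pad_alph A). n \<noteq> [] \<and> fst (last n) = Some x \<and> snd (hd n) = None
        \<and> drop_corners n \<in> M}"
    (is "_ = ?shifted \<union> ?cornered")
proof (intro set_eqI iffI)
  fix n assume "n \<in> append_top [x] M"
  then obtain u v where n: "n = deltaL (u @ [x]) v" and uv: "deltaL u v \<in> M"
    unfolding append_top_def by blast
  have "u \<in> lists A" "v \<in> lists A"
    using uv assms(1) by (auto simp: convolutions_def deltaL_inject)
  then have "n \<in> lists (pad_alph A)"
    unfolding n using assms(2) by (intro deltaL_in_lists_pad_alph) auto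
  moreover have "n \<noteq> []" "fst (last n) = Some x"
    unfolding n by (simp_all flip: length_0_conv add: fst_last_deltaL_snoc)
  moreover have "shift_top n \<in> M \<or> snd (hd n) = None \<and> drop_corners n \<in> M"
  proof (cases "length u < length v")
    case True
    then show ?thesis using uv by (simp add: n shift_top_deltaL_snoc)
  next
    case False
    then have "snd (hd n) = None"
      using snd_hd_deltaL_eq_None_iff[of "u @ [x]" v] unfolding n by (simp flip: length_0_conv)
    then show ?thesis using uv False by (simp add: n drop_corners_deltaL_snoc)
  qed
  ultimately show "n \<in> ?shifted \<union> ?cornered" by blast
next
  fix n assume "n \<in> ?shifted \<union> ?cornered"
  then show "n \<in> append_top [x] M"
  proof
    assume n: "n \<in> ?shifted"
    then obtain u v where uv: "shift_top n = deltaL u v" "deltaL u v \<in> M"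
      using assms(1) by (auto simp: convolutions_def)
    then have "n = deltaL (u @ [x]) v" using n by (intro deltaL_snoc_if_shift_top) auto
    then show ?thesis using uv(2) by (auto simp: append_top_def)
  next
    assume n: "n \<in> ?cornered"
    then obtain u v where uv: "drop_corners n = deltaL u v" "deltaL u v \<in> M"
      using assms(1) by (auto simp: convolutions_def)
    have "hd n \<in> pad_alph A" using n by (cases n) auto
    then have "fst (hd n) \<noteq> None" using n by (auto simp: pad_alph_def)
    then have "n = deltaL (u @ [x]) v" using n uv by (intro deltaL_snoc_if_drop_corners) auto
    then show ?thesis using uv(2) by (auto simp: append_top_def)
  qed
qed

text \<open>Both maps are computed by a transducer that outputs with one letter of delay; its state
  records the first and the previous letter read.\<close>

definition ends_step :: "'b option \<times> 'b option \<Rightarrow> 'b \<Rightarrow> 'b option \<times> 'b option" where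
  "ends_step q a = (if fst q = None then Some a else fst q, Some a)"

definition shift_top_out ::
    "'a pad_letter option \<times> 'a pad_letter option \<Rightarrow> 'a pad_letter \<Rightarrow> 'a pad_letter list" where
  "shift_top_out q a = [(case snd q of None \<Rightarrow> None | Some p \<Rightarrow> fst p, snd a)]"

definition drop_corners_out ::
    "'a pad_letter option \<times> 'a pad_letter option \<Rightarrow> 'a pad_letter \<Rightarrow> 'a pad_letter list" where
  "drop_corners_out q a = (if snd q = None then [] else shift_top_out q a)"

lemma snd_ends_step [simp]: "snd (ends_step q a) = Some a"
  by (simp add: ends_step_def)

lemma foldl_ends_step:
  "foldl ends_step q w = (if w = [] then q else (if fst q = None then Some (hd w) else fst q, Some (last w)))"
  by (induction w arbitrary: q) (auto simp: ends_step_def)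

lemma transduce_shift_top_out:
  "transduce ends_step shift_top_out q n
    = zip ((case snd q of None \<Rightarrow> None | Some p \<Rightarrow> fst p) # butlast (map fst n)) (map snd n)"
proof (induction n arbitrary: q)
  case (Cons a n)
  then show ?case by (cases n) (simp_all add: shift_top_out_def)
qed simp

lemma transduce_drop_corners_out:
  "snd q \<noteq> None \<Longrightarrow> transduce ends_step drop_corners_out q n = transduce ends_step shift_top_out q n"
  by (induction n arbitrary: q) (auto simp: drop_corners_out_def)

lemma transduce_shift_top: "transduce ends_step shift_top_out (None, None) n = shift_top n"
  by (simp add: transduce_shift_top_out shift_top_def)

lemma transduce_drop_corners: "transduce ends_step drop_corners_out (None, None) n = drop_corners n"
proof (cases n)
  case (Cons a n')
  then show ?thesis
    by (cases n') (simp_all add: drop_corners_out_def shift_top_out_def transduce_drop_corners_out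
        transduce_shift_top_out drop_corners_def)
qed (simp add: drop_corners_def)

lemma regular_append_top_singleton:
  assumes "finite A" "regular (pad_alph A) M" "M \<subseteq> convolutions A" "x \<in> A"
  shows "regular (pad_alph A) (append_top [x] M)"
proof -
  let ?Q = "insert None (Some ` pad_alph A) \<times> insert None (Some ` pad_alph A)"
  have "finite (pad_alph A)" using assms(1) by (simp add: pad_alph_def)
  then have Q: "finite ?Q" "(None, None) \<in> ?Q" "\<forall>q\<in>?Q. \<forall>a\<in>pad_alph A. ends_step q a \<in> ?Q"
    by (auto simp: ends_step_def)
  have shifted: "regular (pad_alph A)
      {n \<in> lists (pad_alph A). n \<noteq> [] \<and> fst (last n) = Some x \<and> shift_top n \<in> M}"
    using regular_transducer_preimage[OF Q assms(2), of
        "{q. snd q \<noteq> None \<and> fst (the (snd q)) = Some x}" shift_top_out]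
    by (rule back_subst[where P = "regular (pad_alph A)"]) (auto simp: foldl_ends_step transduce_shift_top)
  have cornered: "regular (pad_alph A)
      {n \<in> lists (pad_alph A). n \<noteq> [] \<and> fst (last n) = Some x \<and> snd (hd n) = None
        \<and> drop_corners n \<in> M}"
    using regular_transducer_preimage[OF Q assms(2), of
        "{q. fst q \<noteq> None \<and> snd (the (fst q)) = None \<and> snd q \<noteq> None \<and> fst (the (snd q)) = Some x}"
        drop_corners_out]
    by (rule back_subst[where P = "regular (pad_alph A)"]) (auto simp: foldl_ends_step transduce_drop_corners)
  show ?thesis
    unfolding append_top_singleton_eq[OF assms(3,4)] by (rule regular_Un[OF shifted cornered])
qed

lemma append_top_Nil: "M \<subseteq> convolutions A \<Longrightarrow> append_top [] M = M"
  unfolding append_top_def convolutions_def by (simp, blast)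

lemma append_top_snoc: "append_top (a @ [x]) M = append_top [x] (append_top a M)"
  unfolding append_top_def by (auto simp: deltaL_inject)

lemma append_top_subset_convolutions:
  "M \<subseteq> convolutions A \<Longrightarrow> a \<in> lists A \<Longrightarrow> append_top a M \<subseteq> convolutions A"
  unfolding append_top_def convolutions_def by (auto simp: deltaL_inject)

lemma regular_append_top:
  assumes "finite A" "regular (pad_alph A) M" "M \<subseteq> convolutions A" "a \<in> lists A"
  shows "regular (pad_alph A) (append_top a M)"
  using assms(4)
proof (induction a rule: rev_induct)
  case Nil
  then show ?case using assms(2,3) by (simp add: append_top_Nil)
next
  case (snoc x a)
  then show ?case
    using regular_append_top_singleton[OF assms(1) _ append_top_subset_convolutions[OF assms(3)]]
    by (simp add: append_top_snoc)
qed

lemma deltaL_in_swap_image_iff: "deltaL u v \<in> map prod.swap ` L \<longleftrightarrow> deltaL v u \<in> L"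
proof -
  have "deltaL u v = map prod.swap (deltaL v u)" by (simp add: deltaL_swap)
  moreover have "inj (map prod.swap)" by (simp add: inj_mapI)
  ultimately show ?thesis by (simp add: inj_image_mem_iff)
qed

definition odot_top :: "'a pad_letter list set \<Rightarrow> 'a pad_letter list set \<Rightarrow> 'a pad_letter list set" where
  "odot_top M N = {deltaL (u @ u') (v @ v') | u v u' v'.
     deltaL u v \<in> M \<and> deltaL u' v' \<in> N \<and> length v' \<le> length u'}"

lemma odot'_eq_odot_top_Un_swap:
  "odot' M N = odot_top M N \<union> map prod.swap ` odot_top (map prod.swap ` M) (map prod.swap ` N)"
proof (intro set_eqI iffI)
  fix n assume "n \<in> odot' M N"
  then obtain u v u' v' where n: "n = deltaL (u @ u') (v @ v')" and "deltaL u v \<in> M" "deltaL u' v' \<in> N"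
    unfolding odot'_def by blast
  then show "n \<in> odot_top M N \<union> map prod.swap ` odot_top (map prod.swap ` M) (map prod.swap ` N)"
    unfolding odot_top_def deltaL_in_swap_image_iff
    by (cases "length v' \<le> length u'") (fastforce simp: deltaL_in_swap_image_iff)+
next
  fix n assume "n \<in> odot_top M N \<union> map prod.swap ` odot_top (map prod.swap ` M) (map prod.swap ` N)"
  then show "n \<in> odot' M N"
    unfolding odot_top_def odot'_def by (auto simp: deltaL_in_swap_image_iff deltaL_swap; blast)
qed

lemma odot_top_eq_UN:
  assumes "N \<subseteq> convolutions A" and bound: "\<forall>u v. deltaL u v \<in> N \<longrightarrow> length u \<le> length v + C"
  shows "odot_top M N = (\<Union>a \<in> {a. set a \<subseteq> A \<and> length a \<le> C}.
    conc (append_top a M) (lquot N (deltaL a []) \<inter> lists (Some ` A \<times> Some ` A)))"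
    (is "_ = ?U")
proof (intro set_eqI iffI)
  fix n assume "n \<in> odot_top M N"
  then obtain u v u' v' where n: "n = deltaL (u @ u') (v @ v')"
    and uv: "deltaL u v \<in> M" and uv': "deltaL u' v' \<in> N" and le: "length v' \<le> length u'"
    unfolding odot_top_def by blast
  have "u' \<in> lists A" "v' \<in> lists A"
    using uv' assms(1) by (auto simp: convolutions_def deltaL_inject)
  define a r where "a = take (length u' - length v') u'" and "r = drop (length u' - length v') u'"
  have u': "u' = a @ r" and r: "length r = length v'" and a: "length a \<le> C"
    using le bound[rule_format, OF uv'] by (auto simp: a_def r_def)
  have "deltaL a [] @ deltaL r v' \<in> N" using uv' by (simp add: u' deltaL_append[OF r])
  moreover have "deltaL r v' \<in> lists (Some ` A \<times> Some ` A)"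
    using r \<open>u' \<in> lists A\<close> \<open>v' \<in> lists A\<close> by (auto simp: lists_aligned_eq u')
  moreover have "n = deltaL (u @ a) v @ deltaL r v'"
    by (simp add: n u' deltaL_append[OF r])
  moreover have "deltaL (u @ a) v \<in> append_top a M" using uv by (auto simp: append_top_def)
  ultimately show "n \<in> ?U" using a \<open>u' \<in> lists A\<close>
    by (auto simp: conc_def lquot_def u' intro!: bexI[of _ a])
next
  fix n assume "n \<in> ?U"
  then obtain a u v t where n: "n = deltaL (u @ a) v @ t" and uv: "deltaL u v \<in> M"
    and t: "deltaL a [] @ t \<in> N" "t \<in> lists (Some ` A \<times> Some ` A)"
    by (auto simp: conc_def append_top_def lquot_def)
  then obtain r s where rs: "t = deltaL r s" "length r = length s"
    by (auto simp: lists_aligned_eq)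
  have "deltaL (a @ r) s \<in> N" using t(1) by (simp add: rs deltaL_append)
  moreover have "n = deltaL (u @ a @ r) (v @ s)" by (simp add: n rs deltaL_append)
  ultimately show "n \<in> odot_top M N" using uv rs(2) unfolding odot_top_def by fastforce
qed

lemma regular_odot_top:
  assumes "finite A" "regular (pad_alph A) M" "regular (pad_alph A) N"
    and "M \<subseteq> convolutions A" "N \<subseteq> convolutions A"
    and "\<forall>u v. deltaL u v \<in> N \<longrightarrow> length u \<le> length v + C"
  shows "regular (pad_alph A) (odot_top M N)"
  unfolding odot_top_eq_UN[OF assms(5,6)]
proof (intro regular_UN regular_conc regular_Int regular_lquot regular_lists)
  show "finite {a. set a \<subseteq> A \<and> length a \<le> C}" by (rule finite_lists_length_le[OF assms(1)])
  show "Some ` A \<times> Some ` A \<subseteq> pad_alph A" by (auto simp: pad_alph_def)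
  show "regular (pad_alph A) (append_top a M)" if "a \<in> {a. set a \<subseteq> A \<and> length a \<le> C}" for a
    using that by (intro regular_append_top assms) auto
qed (rule assms(3))

lemma swap_image_subset_convolutions:
  assumes "L \<subseteq> convolutions A" shows "map prod.swap ` L \<subseteq> convolutions A"
proof
  fix w assume "w \<in> map prod.swap ` L"
  then obtain u v where "w = map prod.swap (deltaL u v)" "u \<in> lists A" "v \<in> lists A"
    using assms unfolding convolutions_def by blast
  then show "w \<in> convolutions A" by (auto simp: deltaL_swap convolutions_def)
qed

theorem mainTheorem3:
  fixes A :: "'a set"
    and M N :: "('a option \<times> 'a option) list set"
    and C C' :: nat
  assumes "finite A"
    and "regular (pad_alph A) M"
    and "regular (pad_alph A) N"
    and "M \<subseteq> {deltaL w1 w2 | w1 w2. w1 \<in> lists A \<and> w2 \<in> lists A}"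
    and "N \<subseteq> {deltaL w1 w2 | w1 w2. w1 \<in> lists A \<and> w2 \<in> lists A}"
    and "\<forall>w1 w2. deltaL w1 w2 \<in> M \<longrightarrow> \<bar>int (length w1) - int (length w2)\<bar> \<le> int C"
    and "\<forall>w1 w2. deltaL w1 w2 \<in> N \<longrightarrow> \<bar>int (length w1) - int (length w2)\<bar> \<le> int C'"
  shows "regular (pad_alph A) (odot' M N)"
proof -
  let ?swap = "\<lambda>L. map prod.swap ` L"
  have conv: "M \<subseteq> convolutions A" "N \<subseteq> convolutions A"
    using assms(4,5) by (simp_all add: convolutions_def)
  have swap_pad: "prod.swap ` pad_alph A \<subseteq> pad_alph A" by (auto simp: pad_alph_def)
  have bound: "\<forall>u v. deltaL u v \<in> N \<longrightarrow> length u \<le> length v + C'"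
    using assms(7) by fastforce
  have swap_bound: "\<forall>u v. deltaL u v \<in> ?swap N \<longrightarrow> length u \<le> length v + C'"
  proof (intro allI impI)
    fix u v assume "deltaL u v \<in> ?swap N"
    then have "\<bar>int (length v) - int (length u)\<bar> \<le> int C'"
      using assms(7) by (simp add: deltaL_in_swap_image_iff)
    then show "length u \<le> length v + C'" by linarith
  qed
  have "regular (pad_alph A) (odot_top M N)"
    by (rule regular_odot_top[OF assms(1-3) conv bound])
  moreover have "regular (pad_alph A) (?swap (odot_top (?swap M) (?swap N)))"
    using assms(1-3) conv swap_pad swap_bound
    by (intro regular_map_swap regular_odot_top swap_image_subset_convolutions) auto
  ultimately show ?thesis
    unfolding odot'_eq_odot_top_Un_swap by (rule regular_Un)
qed

end
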